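(* The multiplicative semigroup $(\mathbb N,\cdot)$ of positive integers is left and right fairly amenable.
   Context: For a semigroup $U$, $s\in U$, $A\subseteq U$: $s$ acts injectively on the left (right) of $A$ if $a\mapsto sa$ ($a\mapsto as$) is injective on $A$. A finitely-additive probability measure on $U$ is $\mu:\mathcal P(U)\to[0,1]$ with $\mu(U)=1$, additive on disjoint sets; it is left fairly invariant if $\mu(sA)=\mu(A)$ whenever $s$ acts injectively on the left of $A$ (right fairly invariant analogously with $As$). $U$ is left (right) fairly amenable if such a measure exists. *)

theory Defs
  imports Complex_Main
begin

definition fa_prob_measure :: "'a set \<Rightarrow> ('a set \<Rightarrow> real) \<Rightarrow> bool" where
  "fa_prob_measure U \<mu> \<longleftrightarrow>
     (\<forall>A. A \<subseteq> U \<longrightarrow> 0 \<le> \<mu> A \<and> \<mu> A \<le> 1) \<and> \<mu> U = 1 \<and>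
     (\<forall>A B. A \<subseteq> U \<longrightarrow> B \<subseteq> U \<longrightarrow> A \<inter> B = {} \<longrightarrow> \<mu> (A \<union> B) = \<mu> A + \<mu> B)"

definition left_fairly_invariant :: "'a set \<Rightarrow> ('a \<Rightarrow> 'a \<Rightarrow> 'a) \<Rightarrow> ('a set \<Rightarrow> real) \<Rightarrow> bool" where
  "left_fairly_invariant U f \<mu> \<longleftrightarrow>
     (\<forall>s\<in>U. \<forall>A. A \<subseteq> U \<longrightarrow> inj_on (\<lambda>a. f s a) A \<longrightarrow> \<mu> ((\<lambda>a. f s a) ` A) = \<mu> A)"

definition right_fairly_invariant :: "'a set \<Rightarrow> ('a \<Rightarrow> 'a \<Rightarrow> 'a) \<Rightarrow> ('a set \<Rightarrow> real) \<Rightarrow> bool" where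
  "right_fairly_invariant U f \<mu> \<longleftrightarrow>
     (\<forall>s\<in>U. \<forall>A. A \<subseteq> U \<longrightarrow> inj_on (\<lambda>a. f a s) A \<longrightarrow> \<mu> ((\<lambda>a. f a s) ` A) = \<mu> A)"

definition left_fairly_amenable :: "'a set \<Rightarrow> ('a \<Rightarrow> 'a \<Rightarrow> 'a) \<Rightarrow> bool" where
  "left_fairly_amenable U f \<longleftrightarrow>
     (\<exists>\<mu>. fa_prob_measure U \<mu> \<and> left_fairly_invariant U f \<mu>)"

definition right_fairly_amenable :: "'a set \<Rightarrow> ('a \<Rightarrow> 'a \<Rightarrow> 'a) \<Rightarrow> bool" where
  "right_fairly_amenable U f \<longleftrightarrow>
     (\<exists>\<mu>. fa_prob_measure U \<mu> \<and> right_fairly_invariant U f \<mu>)"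

end

theory Submission
  imports Defs "HOL-Analysis.Analysis" "HOL-Computational_Algebra.Primes"
begin

text \<open>
  Let \<open>D\<^sub>m\<close> be the set of divisors of \<open>N\<^sub>m = (m!)\<^sup>m\<close> and \<open>\<delta>\<^sub>m(A) = |A \<inter> D\<^sub>m| / |D\<^sub>m|\<close>.
  Multiplication by a prime \<open>p\<close> is injective and maps \<open>A \<inter> D\<^sub>m\<close> into \<open>D\<^sub>m\<close>, except for the
  divisors \<open>a\<close> such that \<open>p a\<close> does not divide \<open>N\<^sub>m\<close>. Since \<open>p\<^sup>m\<close> divides \<open>N\<^sub>m\<close> as soon as
  \<open>p \<le> m\<close>, these form at most a \<open>1/(m+1)\<close> fraction of \<open>D\<^sub>m\<close>, so \<open>\<delta>\<^sub>m(pA) - \<delta>\<^sub>m(A) \<rightarrow> 0\<close>, and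
  by factoring \<open>s\<close> into primes also \<open>\<delta>\<^sub>m(sA) - \<delta>\<^sub>m(A) \<rightarrow> 0\<close> for every \<open>s > 0\<close>. A cluster
  point \<open>\<mu>\<close> of the sequence \<open>\<delta>\<^sub>m\<close> in the compact space \<open>[0,1]\<^bsup>P(\<nat>)\<^esup>\<close> is then a finitely
  additive probability measure with \<open>\<mu>(sA) = \<mu>(A)\<close>; as multiplication is commutative, \<open>\<mu>\<close> is
  both left and right fairly invariant.
\<close>

lemma cluster_point_of_unit_interval_valued:
  fixes d :: "'b \<Rightarrow> 'a \<Rightarrow> real"
  assumes "F \<noteq> bot" and "\<And>x i. d x i \<in> {0..1}"
  obtains \<mu> where "\<And>i. \<mu> i \<in> {0..1}"
    and "\<And>(\<phi> :: ('a \<Rightarrow> real) \<Rightarrow> real) c.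
           continuous_on UNIV \<phi> \<Longrightarrow> ((\<lambda>x. \<phi> (d x)) \<longlongrightarrow> c) F \<Longrightarrow> \<phi> \<mu> = c"
proof -
  have "compactin (product_topology (\<lambda>_. euclidean) UNIV) (PiE UNIV (\<lambda>_::'a. {0..1::real}))"
    by (simp add: compactin_PiE)
  then have "compact (PiE UNIV (\<lambda>_::'a. {0..1::real}))"
    by (simp add: euclidean_product_topology compactin_euclidean_iff)
  moreover have "filtermap d F \<noteq> bot"
    using assms(1) by (simp add: filtermap_bot_iff)
  moreover have "eventually (\<lambda>\<nu>. \<nu> \<in> PiE UNIV (\<lambda>_. {0..1})) (filtermap d F)"
    using assms(2) by (simp add: eventually_filtermap PiE_iff)
  ultimately obtain \<mu> where \<mu>: "\<mu> \<in> PiE UNIV (\<lambda>_. {0..1})"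
    and cluster: "inf (nhds \<mu>) (filtermap d F) \<noteq> bot"
    unfolding compact_filter by blast
  show thesis
  proof (rule that)
    show "\<mu> i \<in> {0..1}" for i
      using \<mu> by (simp add: PiE_iff)
  next
    fix \<phi> :: "('a \<Rightarrow> real) \<Rightarrow> real" and c
    assume "continuous_on UNIV \<phi>" and lim: "((\<lambda>x. \<phi> (d x)) \<longlongrightarrow> c) F"
    then have "(\<phi> \<longlongrightarrow> \<phi> \<mu>) (inf (nhds \<mu>) (filtermap d F))"
      by (intro tendsto_mono[OF inf_le1])
         (simp add: continuous_on_def tendsto_at_iff_tendsto_nhds[symmetric])
    moreover have "(\<phi> \<longlongrightarrow> c) (inf (nhds \<mu>) (filtermap d F))"
      using lim by (intro tendsto_mono[OF inf_le2]) (simp add: filterlim_filtermap)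
    ultimately show "\<phi> \<mu> = c"
      by (rule tendsto_unique[OF cluster])
  qed
qed

lemma prime_power_dvd_maximal_divisor:
  fixes p N a k :: nat
  assumes "prime p" and "p ^ k dvd N" and "a dvd N" and "\<not> p * a dvd N"
  shows "p ^ k dvd a"
proof -
  obtain c where N: "N = a * c" using \<open>a dvd N\<close> by blast
  then have "\<not> p dvd c" using \<open>\<not> p * a dvd N\<close> by (auto simp: mult.commute)
  then have "coprime (p ^ k) c"
    using \<open>prime p\<close> by (metis prime_imp_power_coprime coprime_commute)
  then show ?thesis using \<open>p ^ k dvd N\<close> N by (simp add: coprime_dvd_mult_left_iff)
qed

lemma card_maximal_divisors_le:
  fixes p N k :: nat
  assumes p: "prime p" and "N > 0" and "p ^ k dvd N"
  shows "(k + 1) * card {a. a dvd N \<and> \<not> p * a dvd N} \<le> card {a. a dvd N}"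
proof -
  define S where "S = {a. a dvd N \<and> \<not> p * a dvd N}"
  have pow_dvd: "p ^ j dvd a" if "a \<in> S" "j \<le> k" for a j
    using prime_power_dvd_maximal_divisor[OF p \<open>p ^ k dvd N\<close>] that le_imp_power_dvd dvd_trans
    unfolding S_def by blast
  \<comment> \<open>\<open>a div p\<^sup>i = b div p\<^sup>j\<close> with \<open>i < j\<close> would give \<open>b = p\<^sup>j\<^sup>-\<^sup>i a\<close>, so \<open>p a\<close> divides \<open>N\<close>.\<close>
  have no_shift: "\<not> i < j"
    if "a \<in> S" "b \<in> S" "i \<le> k" "j \<le> k" "a div p ^ i = b div p ^ j" for a b i j
  proof
    assume "i < j"
    have "b = p ^ (j - i) * (p ^ i * (b div p ^ j))"
      using pow_dvd[OF that(2,4)] \<open>i < j\<close> by (simp flip: mult.assoc power_add)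
    also have "\<dots> = p ^ (j - i) * a"
      using pow_dvd[OF that(1,3)] that(5) by (metis dvd_mult_div_cancel)
    finally have "p * a dvd b"
      using \<open>i < j\<close> by (simp add: dvd_power)
    then show False
      using that(1,2) unfolding S_def by (blast intro: dvd_trans)
  qed
  have "inj_on (\<lambda>(a, j). a div p ^ j) (S \<times> {..k})"
  proof (rule inj_onI, clarify)
    fix a i b j
    assume eq: "a div p ^ i = b div p ^ j" and "a \<in> S" "i \<le> k" "b \<in> S" "j \<le> k"
    then have "i = j" using no_shift[of a b i j] no_shift[of b a j i] by force
    moreover from this have "a = b" using eq pow_dvd \<open>a \<in> S\<close> \<open>b \<in> S\<close> \<open>i \<le> k\<close>
      by (metis dvd_div_mult_self)
    ultimately show "a = b \<and> i = j" by simp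
  qed
  moreover have "(\<lambda>(a, j). a div p ^ j) ` (S \<times> {..k}) \<subseteq> {a. a dvd N}"
  proof clarify
    fix a j
    assume "a \<in> S" "j \<le> k"
    then have "a div p ^ j dvd a" using pow_dvd by (metis dvdI dvd_div_mult_self)
    then show "a div p ^ j dvd N" using \<open>a \<in> S\<close> unfolding S_def by (blast intro: dvd_trans)
  qed
  ultimately have "card (S \<times> {..k}) \<le> card {a. a dvd N}"
    using \<open>N > 0\<close> by (intro card_inj_on_le) simp_all
  then show ?thesis
    unfolding S_def by (simp add: card_cartesian_product mult.commute)
qed

definition divisor_density :: "nat \<Rightarrow> nat set \<Rightarrow> real" where
  "divisor_density N A = real (card (A \<inter> {d. d dvd N})) / real (card {d. d dvd N})"

lemma card_divisors_pos: "0 < N \<Longrightarrow> 0 < card {d :: nat. d dvd N}"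
  by (metis (mono_tags) card_gt_0_iff empty_iff finite_divisors_nat mem_Collect_eq one_dvd)

lemma divisor_density_bounds:
  assumes "0 < N"
  shows "divisor_density N A \<in> {0..1}"
proof -
  have "card (A \<inter> {d. d dvd N}) \<le> card {d. d dvd N}"
    using assms by (intro card_mono) auto
  then show ?thesis
    using card_divisors_pos[OF assms] by (simp add: divisor_density_def)
qed

lemma divisor_density_Un:
  assumes "0 < N" and "A \<inter> B = {}"
  shows "divisor_density N (A \<union> B) = divisor_density N A + divisor_density N B"
proof -
  have "card ((A \<union> B) \<inter> {d. d dvd N}) = card (A \<inter> {d. d dvd N}) + card (B \<inter> {d. d dvd N})"
    using assms by (subst card_Un_disjoint[symmetric]) (auto simp: Int_Un_distrib2)
  then show ?thesis
    by (simp add: divisor_density_def add_divide_distrib)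
qed

lemma divisor_density_superset:
  assumes "0 < N" and "{d. d dvd N} \<subseteq> A"
  shows "divisor_density N A = 1"
proof -
  have "A \<inter> {d. d dvd N} = {d. d dvd N}"
    using assms(2) by blast
  then show ?thesis
    using card_divisors_pos[OF assms(1)] by (simp add: divisor_density_def)
qed

lemma divisor_density_mult_prime:
  assumes p: "prime p" and "0 < N" and "p ^ k dvd N"
  shows "\<bar>divisor_density N ((*) p ` A) - divisor_density N A\<bar> \<le> inverse (real (Suc k))"
proof -
  define D where "D = {d. d dvd N}"
  define B where "B = {a \<in> A. p * a dvd N}"
  define S where "S = {a. a dvd N \<and> \<not> p * a dvd N}"
  have "card ((*) p ` A \<inter> D) = card B"
  proof -
    have "(*) p ` A \<inter> D = (*) p ` B"
      unfolding B_def D_def by auto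
    then show ?thesis
      using p by (simp add: card_image inj_on_def prime_gt_0_nat)
  qed
  moreover have "card (A \<inter> D - B) = card (A \<inter> D) - card B"
    and "card B \<le> card (A \<inter> D)"
  proof -
    have "B \<subseteq> A \<inter> D" and "finite (A \<inter> D)"
      using \<open>0 < N\<close> unfolding B_def D_def by (auto intro: dvd_mult_right)
    then show "card (A \<inter> D - B) = card (A \<inter> D) - card B" and "card B \<le> card (A \<inter> D)"
      by (meson card_Diff_subset card_mono finite_subset)+
  qed
  moreover have le: "card (A \<inter> D - B) \<le> card S"
    using \<open>0 < N\<close> unfolding B_def D_def S_def by (intro card_mono) auto
  ultimately have "\<bar>divisor_density N ((*) p ` A) - divisor_density N A\<bar> = card (A \<inter> D - B) / card D"
    by (simp add: divisor_density_def D_def[symmetric] flip: diff_divide_distrib of_nat_diff)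
  also have "\<dots> \<le> card S / card D"
    using le by (simp add: divide_right_mono)
  also have "\<dots> \<le> inverse (real (Suc k))"
  proof -
    have "real (Suc k) * card S \<le> card D"
      using card_maximal_divisors_le[OF assms] unfolding D_def S_def
      by (metis Suc_eq_plus1 of_nat_le_iff of_nat_mult)
    then show ?thesis
      using card_divisors_pos[OF \<open>0 < N\<close>] by (simp add: D_def field_simps)
  qed
  finally show ?thesis .
qed

lemma divisor_density_mult_tendsto:
  assumes pos: "\<And>x. 0 < N x"
    and prime_powers: "\<And>p k. prime p \<Longrightarrow> eventually (\<lambda>x. p ^ k dvd N x) F"
    and "0 < s"
  shows "((\<lambda>x. divisor_density (N x) ((*) s ` A) - divisor_density (N x) A) \<longlongrightarrow> 0) F"
  using \<open>0 < s\<close>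
proof (induction s arbitrary: A rule: less_induct)
  case (less s)
  show ?case
  proof (cases "s = 1")
    case True
    then show ?thesis by simp
  next
    case False
    then obtain p t where p: "prime p" and s: "s = p * t"
      using prime_factor_nat by blast
    then have "0 < t" and "t < s"
      using \<open>0 < s\<close> prime_gt_1_nat[OF p] by auto
    have prime_step: "((\<lambda>x. divisor_density (N x) ((*) p ` B) - divisor_density (N x) B) \<longlongrightarrow> 0) F" for B
    proof (rule tendstoI)
      fix \<epsilon> :: real
      assume "0 < \<epsilon>"
      then obtain k where k: "inverse (real (Suc k)) < \<epsilon>"
        using reals_Archimedean by blast
      from prime_powers[OF p, of k] show "eventually (\<lambda>x. dist (divisor_density (N x) ((*) p ` B)
          - divisor_density (N x) B) 0 < \<epsilon>) F"
      proof eventually_elim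
        case (elim x)
        show ?case
          using divisor_density_mult_prime[OF p pos elim, of B] k by (simp add: dist_real_def)
      qed
    qed
    have "(*) s ` A = (*) p ` (*) t ` A"
      unfolding s image_comp by (simp add: comp_def mult.assoc)
    moreover have "((\<lambda>x. (divisor_density (N x) ((*) p ` (*) t ` A) - divisor_density (N x) ((*) t ` A))
        + (divisor_density (N x) ((*) t ` A) - divisor_density (N x) A)) \<longlongrightarrow> 0 + 0) F"
      by (rule tendsto_add[OF prime_step less.IH[OF \<open>t < s\<close> \<open>0 < t\<close>]])
    ultimately show ?thesis
      by simp
  qed
qed

lemma eventually_power_dvd_fact_power:
  fixes s k :: nat
  assumes "0 < s"
  shows "eventually (\<lambda>m. s ^ k dvd fact m ^ m) sequentially"
  unfolding eventually_sequentially
proof (intro exI allI impI)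
  fix m
  assume m: "max s k \<le> m"
  then have "s dvd fact m"
    using assms by (intro dvd_fact) auto
  then have "s ^ m dvd fact m ^ m"
    by (rule dvd_power_same)
  moreover have "s ^ k dvd s ^ m"
    using m by (simp add: le_imp_power_dvd)
  ultimately show "s ^ k dvd fact m ^ m"
    by (rule dvd_trans[rotated])
qed

lemma mult_invariant_probability_measure_nat:
  obtains \<mu> :: "nat set \<Rightarrow> real"
  where "fa_prob_measure {n. 0 < n} \<mu>" and "\<And>s A. 0 < s \<Longrightarrow> \<mu> ((*) s ` A) = \<mu> A"
proof -
  let ?\<delta> = "\<lambda>m. divisor_density (fact m ^ m)"
  have pos: "0 < (fact m :: nat) ^ m" for m
    by simp
  obtain \<mu> where bounds: "\<And>A. \<mu> A \<in> {0..1}"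
    and limit: "\<And>\<phi> c. continuous_on UNIV \<phi> \<Longrightarrow> ((\<lambda>m. \<phi> (?\<delta> m)) \<longlongrightarrow> c) sequentially
                  \<Longrightarrow> \<phi> \<mu> = (c :: real)"
    by (fact cluster_point_of_unit_interval_valued[of sequentially ?\<delta>,
          OF trivial_limit_sequentially divisor_density_bounds[OF pos]])
  have coord: "continuous_on UNIV (\<lambda>\<nu> :: nat set \<Rightarrow> real. \<nu> A)" for A
    by simp
  have "\<mu> {n. 0 < n} = 1"
  proof (rule limit[OF coord])
    have "?\<delta> m {n. 0 < n} = 1" for m
      by (rule divisor_density_superset[OF pos]) (auto intro: dvd_pos_nat[OF pos])
    then show "((\<lambda>m. ?\<delta> m {n. 0 < n}) \<longlongrightarrow> 1) sequentially"
      by simp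
  qed
  moreover have "\<mu> (A \<union> B) = \<mu> A + \<mu> B" if "A \<inter> B = {}" for A B
  proof -
    have "\<mu> (A \<union> B) - \<mu> A - \<mu> B = 0"
    proof (rule limit[OF continuous_on_diff[OF continuous_on_diff[OF coord coord] coord]])
      show "((\<lambda>m. ?\<delta> m (A \<union> B) - ?\<delta> m A - ?\<delta> m B) \<longlongrightarrow> 0) sequentially"
        by (simp add: divisor_density_Un[OF pos that])
    qed
    then show ?thesis
      by simp
  qed
  ultimately have "fa_prob_measure {n. 0 < n} \<mu>"
    using bounds by (simp add: fa_prob_measure_def)
  moreover have "\<mu> ((*) s ` A) = \<mu> A" if "0 < s" for s A
  proof -
    have "((\<lambda>m. ?\<delta> m ((*) s ` A) - ?\<delta> m A) \<longlongrightarrow> 0) sequentially"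
      by (rule divisor_density_mult_tendsto[OF pos eventually_power_dvd_fact_power[OF prime_gt_0_nat] that])
    then have "\<mu> ((*) s ` A) - \<mu> A = 0"
      by (rule limit[OF continuous_on_diff[OF coord coord]])
    then show ?thesis
      by simp
  qed
  ultimately show thesis
    using that by blast
qed

theorem mainTheorem18:
  shows "left_fairly_amenable {n::nat. 0 < n} (\<lambda>x y. x * y) \<and>
         right_fairly_amenable {n::nat. 0 < n} (\<lambda>x y. x * y)"
proof -
  obtain \<mu> where "fa_prob_measure {n :: nat. 0 < n} \<mu>" and "\<And>s A. 0 < s \<Longrightarrow> \<mu> ((*) s ` A) = \<mu> A"
    using mult_invariant_probability_measure_nat by blast
  moreover have "(\<lambda>a. a * s) ` A = (*) s ` A" for s :: nat and A
    by (auto simp: mult.commute)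
  ultimately show ?thesis
    unfolding left_fairly_amenable_def right_fairly_amenable_def
      left_fairly_invariant_def right_fairly_invariant_def
    by auto
qed

end
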